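(* Let $\mathcal{G}=(\mathcal{V},\mathcal{E})$ be an unweighted connected finite simple graph and let $u\in\mathcal{V}$ be dominated by some vertex $v\in\mathcal{V}$, $v\neq u$. Then for every $k\geq 1$, $$\widehat{PD}_k(\mathcal{G})=\widehat{PD}_k(\mathcal{G}-\{u\}).$$
   Context: $N(w)$ is the closed neighborhood of $w$ (the vertex together with its neighbors); $u$ is dominated by $v\ne u$ if $N(u)\subset N(v)$. $\mathcal{G}-\{u\}$ deletes $u$ and its incident edges. For $n\ge 1$, the $n$-th power $\mathcal{G}^{(n)}$ is the graph on $\mathcal{V}$ in which distinct vertices $x,y$ are adjacent iff their shortest-path distance $d(x,y)$ in $\mathcal{G}$ (each edge of length 1) is at most $n$. The power filtration is $K_0\subset K_1\subset K_2\subset\cdots\subset K_N$, where $K_0$ is the vertex set $\mathcal{V}$ (as a 0-dimensional complex), $K_n$ for $n\ge 1$ is the clique (flag) complex of $\mathcal{G}^{(n)}$, and $N$ is the diameter of $\mathcal{G}$. $\widehat{PD}_k(\mathcal{G})$ is the $k$-th persistence diagram (field coefficients) of this filtration. *)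

theory Defs
  imports Main "HOL-Library.Function_Algebras" "HOL-Library.Extended_Nat"
begin

definition simple_graph :: "'v set \<Rightarrow> ('v \<Rightarrow> 'v \<Rightarrow> bool) \<Rightarrow> bool" where
  "simple_graph V E \<longleftrightarrow> finite V \<and> (\<forall>x y. E x y \<longrightarrow> x \<in> V \<and> y \<in> V)
     \<and> (\<forall>x y. E x y \<longrightarrow> E y x) \<and> (\<forall>x. \<not> E x x)"

definition is_walk :: "'v set \<Rightarrow> ('v \<Rightarrow> 'v \<Rightarrow> bool) \<Rightarrow> 'v list \<Rightarrow> 'v \<Rightarrow> 'v \<Rightarrow> bool" where
  "is_walk V E xs x y \<longleftrightarrow> xs \<noteq> [] \<and> hd xs = x \<and> last xs = y \<and> set xs \<subseteq> V
     \<and> (\<forall>i. Suc i < length xs \<longrightarrow> E (xs ! i) (xs ! Suc i))"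

text \<open>Shortest-path distance (each edge has length 1); \<infinity> if no path exists.\<close>
definition gdist :: "'v set \<Rightarrow> ('v \<Rightarrow> 'v \<Rightarrow> bool) \<Rightarrow> 'v \<Rightarrow> 'v \<Rightarrow> enat" where
  "gdist V E x y = Inf {enat (length xs - 1) | xs. is_walk V E xs x y}"

definition connected_graph :: "'v set \<Rightarrow> ('v \<Rightarrow> 'v \<Rightarrow> bool) \<Rightarrow> bool" where
  "connected_graph V E \<longleftrightarrow> V \<noteq> {} \<and> (\<forall>x\<in>V. \<forall>y\<in>V. \<exists>xs. is_walk V E xs x y)"

definition closed_nbhd :: "('v \<Rightarrow> 'v \<Rightarrow> bool) \<Rightarrow> 'v \<Rightarrow> 'v set" where
  "closed_nbhd E w = insert w {y. E w y}"

definition dominated_by :: "'v set \<Rightarrow> ('v \<Rightarrow> 'v \<Rightarrow> bool) \<Rightarrow> 'v \<Rightarrow> 'v \<Rightarrow> bool" where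
  "dominated_by V E u v \<longleftrightarrow> u \<in> V \<and> v \<in> V \<and> v \<noteq> u \<and> closed_nbhd E u \<subseteq> closed_nbhd E v"

definition del_vertices :: "'v set \<Rightarrow> 'v \<Rightarrow> 'v set" where
  "del_vertices V u = V - {u}"

definition del_edges :: "('v \<Rightarrow> 'v \<Rightarrow> bool) \<Rightarrow> 'v \<Rightarrow> 'v \<Rightarrow> 'v \<Rightarrow> bool" where
  "del_edges E u = (\<lambda>x y. E x y \<and> x \<noteq> u \<and> y \<noteq> u)"

text \<open>K_n = clique complex of the n-th power graph (for n = 0: just the vertices). K_\<infinity> is the final complex
  (= K_N, N the diameter, for connected graphs).\<close>
definition power_complex :: "'v set \<Rightarrow> ('v \<Rightarrow> 'v \<Rightarrow> bool) \<Rightarrow> enat \<Rightarrow> 'v set set" where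
  "power_complex V E n = {\<sigma>. \<sigma> \<noteq> {} \<and> finite \<sigma> \<and> \<sigma> \<subseteq> V \<and>
      (\<forall>x\<in>\<sigma>. \<forall>y\<in>\<sigma>. x \<noteq> y \<longrightarrow> gdist V E x y \<le> n)}"

text \<open>k-chains of a complex K: functions on k-simplices (card = k+1), oriented by the
  order of the vertex type.\<close>
definition chains :: "'v set set \<Rightarrow> nat \<Rightarrow> ('v set \<Rightarrow> 'f::field) set" where
  "chains K k = {c. \<forall>\<sigma>. c \<sigma> \<noteq> 0 \<longrightarrow> \<sigma> \<in> K \<and> card \<sigma> = Suc k}"

text \<open>Boundary operator d_k : C_k \<rightarrow> C_{k-1}, d_0 = 0;
  d[v_0<...<v_k] = sum_i (-1)^i [v_0..^v_i..v_k].\<close>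
definition bdry :: "'v::linorder set \<Rightarrow> nat \<Rightarrow> ('v set \<Rightarrow> 'f::field) \<Rightarrow> 'v set \<Rightarrow> 'f" where
  "bdry V k c \<tau> = (if k \<ge> 1 \<and> card \<tau> = k then
      (\<Sum>w\<in>V - \<tau>. (-1) ^ card {x\<in>\<tau>. x < w} * c (insert w \<tau>)) else 0)"

definition cycles :: "'v::linorder set \<Rightarrow> 'v set set \<Rightarrow> nat \<Rightarrow> ('v set \<Rightarrow> 'f::field) set" where
  "cycles V K k = {c \<in> chains K k. bdry V k c = 0}"

definition boundaries :: "'v::linorder set \<Rightarrow> 'v set set \<Rightarrow> nat \<Rightarrow> ('v set \<Rightarrow> 'f::field) set" where
  "boundaries V K k = bdry V (Suc k) ` chains K (Suc k)"

definition dimF :: "('v set \<Rightarrow> 'f::field) set \<Rightarrow> nat" where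
  "dimF S = vector_space.dim (\<lambda>a (f :: 'v set \<Rightarrow> 'f). (\<lambda>x. a * f x)) S"

text \<open>Persistent Betti number beta_k^{i,j} = rank(H_k(K_i) \<rightarrow> H_k(K_j)), i \<le> j:
  the image is (Z_k(K_i) + B_k(K_j)) / B_k(K_j).\<close>
definition pers_betti :: "'f::field itself \<Rightarrow> 'v::linorder set \<Rightarrow> ('v \<Rightarrow> 'v \<Rightarrow> bool)
    \<Rightarrow> nat \<Rightarrow> enat \<Rightarrow> enat \<Rightarrow> nat" where
  "pers_betti F V E k i j =
     dimF {z + b | z b. z \<in> (cycles V (power_complex V E i) k :: ('v set \<Rightarrow> 'f) set) \<and>
                        b \<in> boundaries V (power_complex V E j) k}
     - dimF (boundaries V (power_complex V E j) k :: ('v set \<Rightarrow> 'f) set)"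

text \<open>beta with the convention beta^{-1,j} = 0 (birth index shifted by one).\<close>
definition betti_prev :: "'f::field itself \<Rightarrow> 'v::linorder set \<Rightarrow> ('v \<Rightarrow> 'v \<Rightarrow> bool)
    \<Rightarrow> nat \<Rightarrow> nat \<Rightarrow> enat \<Rightarrow> int" where
  "betti_prev F V E k b j = (if b = 0 then 0 else int (pers_betti F V E k (enat (b - 1)) j))"

text \<open>k-th persistence diagram of the power filtration, as the multiplicity function of
  points (birth b, death d), d = \<infinity> for essential classes, given by the standard
  inclusion-exclusion formula of persistent Betti numbers.\<close>
definition PD :: "'f::field itself \<Rightarrow> 'v::linorder set \<Rightarrow> ('v \<Rightarrow> 'v \<Rightarrow> bool)
    \<Rightarrow> nat \<Rightarrow> nat \<Rightarrow> enat \<Rightarrow> int" where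
  "PD F V E k b d =
    (if d = \<infinity> then int (pers_betti F V E k (enat b) \<infinity>) - betti_prev F V E k b \<infinity>
     else if enat b < d then
       (let j = the_enat d in
          int (pers_betti F V E k (enat b) (enat (j - 1))) - betti_prev F V E k b (enat (j - 1))
        - int (pers_betti F V E k (enat b) (enat j)) + betti_prev F V E k b (enat j))
     else 0)"

end

theory Submission
  imports Defs
begin

text \<open>If \<open>v\<close> dominates \<open>u\<close>, then \<open>d(v,x) \<le> d(u,x)\<close> for every \<open>x \<noteq> u\<close> and \<open>d(u,v) = 1\<close>,
  so in every power complex a simplex through \<open>u\<close> with at least two vertices stays a simplex
  after adding \<open>v\<close>; moreover deleting \<open>u\<close> does not change the distances between the other
  vertices, so the power complexes of \<open>G - u\<close> are exactly the simplices avoiding \<open>u\<close>.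
  Coning simplices through \<open>u\<close> with \<open>v\<close> is then a chain homotopy \<open>h\<close> between the identity and
  the chain map \<open>P = id - \<partial>h - h\<partial>\<close>, which annihilates every simplex through \<open>u\<close> and fixes all
  chains avoiding it. As \<open>P\<close> is defined uniformly for all filtration steps, it identifies the
  images of \<open>H\<^sub>k(K\<^sub>i) \<rightarrow> H\<^sub>k(K\<^sub>j)\<close> for both graphs, so all persistent Betti numbers in
  degrees \<open>k \<ge> 1\<close> agree, and with them the persistence diagrams.\<close>

section \<open>Linear algebra\<close>

context vector_space begin

lemma independent_Un:
  assumes S: "independent S" and T: "independent T" and ST: "span S \<inter> span T \<subseteq> {0}"
  shows "independent (S \<union> T)"
  unfolding independent_explicit_module
proof (intro allI impI)
  fix t c w assume t: "finite t" "t \<subseteq> S \<union> T" and sum0: "(\<Sum>v\<in>t. c v *s v) = 0" and w: "w \<in> t"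
  define x where "x = (\<Sum>v\<in>t \<inter> S. c v *s v)"
  define y where "y = (\<Sum>v\<in>t - S. c v *s v)"
  have "x + y = 0"
    using sum0 sum.Int_Diff[OF t(1), of "\<lambda>v. c v *s v" S] unfolding x_def y_def by simp
  moreover have "x \<in> span S" unfolding x_def by (intro span_sum span_scale span_base) blast
  moreover have "y \<in> span T" unfolding y_def using t(2) by (intro span_sum span_scale span_base) blast
  ultimately have "x = 0" "y = 0"
    using ST span_neg[of x S] by (auto simp: add_eq_0_iff2)
  then show "c w = 0"
    using independentD[OF S, of "t \<inter> S" c w] independentD[OF T, of "t - S" c w] t w
    unfolding x_def y_def by blast
qed

text \<open>\<open>dim\<close> is the cardinality of a basis and hence \<open>0\<close> for infinite bases, so the subspaces
  are kept inside the span of a finite set.\<close>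

lemma dim_direct_sum:
  assumes S: "subspace S" and T: "subspace T" and ST: "S \<inter> T \<subseteq> {0}"
    and W: "S \<subseteq> span W" "T \<subseteq> span W" "finite W"
  shows "dim {x + y |x y. x \<in> S \<and> y \<in> T} = dim S + dim T"
proof -
  obtain BS where BS: "BS \<subseteq> S" "independent BS" "S \<subseteq> span BS" "card BS = dim S"
    using basis_exists by metis
  obtain BT where BT: "BT \<subseteq> T" "independent BT" "T \<subseteq> span BT" "card BT = dim T"
    using basis_exists by metis
  have spans: "span BS = S" "span BT = T"
    using span_minimal[OF BS(1) S] span_minimal[OF BT(1) T] BS(3) BT(3) by auto
  have "finite BS" "finite BT"
    using independent_span_bound[OF W(3) BS(2)] independent_span_bound[OF W(3) BT(2)] BS(1) BT(1) W
    by blast+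
  moreover have "BS \<inter> BT = {}"
    using BS(1,2) BT(1) ST dependent_zero by blast
  moreover have "span (BS \<union> BT) = span {x + y |x y. x \<in> S \<and> y \<in> T}"
    unfolding span_Un spans span_eq_iff[THEN iffD2, OF subspace_sums[OF S T]] ..
  moreover have "independent (BS \<union> BT)"
    using independent_Un[OF BS(2) BT(2)] ST spans by simp
  ultimately show ?thesis
    using dim_eq_card BS(4) BT(4) by (simp add: card_Un_disjoint)
qed

lemma sums_image_kernel:
  assumes X: "subspace X" and X': "X' \<subseteq> X"
    and fX: "\<And>x. x \<in> X \<Longrightarrow> f x \<in> X'" and fid: "\<And>x. x \<in> X' \<Longrightarrow> f x = x"
    and f: "Vector_Spaces.linear (*s) (*s) f"
  shows "X = {y + z |y z. y \<in> X' \<and> z \<in> {x \<in> X. f x = 0}}"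
proof -
  interpret Vector_Spaces.linear "(*s)" "(*s)" f by (fact f)
  have kernel: "x - f x \<in> {x \<in> X. f x = 0}" if "x \<in> X" for x
    using that fX X' subspace_diff[OF X] fid by (simp add: diff subset_iff)
  show ?thesis
  proof (intro equalityI subsetI)
    fix x assume "x \<in> X"
    then have "f x \<in> X'" "x - f x \<in> {x \<in> X. f x = 0}" "x = f x + (x - f x)"
      using fX kernel by simp_all
    then show "x \<in> {y + z |y z. y \<in> X' \<and> z \<in> {x \<in> X. f x = 0}}"
      by blast
  qed (use X' subspace_add[OF X] in blast)
qed

lemma dim_diff_eq_of_retraction:
  assumes A: "subspace A" and B: "subspace B" and A': "subspace A'" and B': "subspace B'"
    and W: "A \<subseteq> span W" "finite W"
    and incl: "B \<subseteq> A" "A' \<subseteq> A" "B' \<subseteq> B" "B' \<subseteq> A'"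
    and f: "Vector_Spaces.linear (*s) (*s) f"
    and fA: "\<And>x. x \<in> A \<Longrightarrow> f x \<in> A'" and fB: "\<And>x. x \<in> B \<Longrightarrow> f x \<in> B'"
    and fid: "\<And>x. x \<in> A' \<Longrightarrow> f x = x"
    and ker: "\<And>x. x \<in> A \<Longrightarrow> f x = 0 \<Longrightarrow> x \<in> B"
  shows "dim A - dim B = dim A' - dim B'"
proof -
  interpret Vector_Spaces.linear "(*s)" "(*s)" f by (fact f)
  define N where "N = {x \<in> A. f x = 0}"
  have N: "subspace N"
    using subspace_inter[OF A subspace_kernel] unfolding N_def Int_def by simp
  have NB: "{x \<in> B. f x = 0} = N"
    using ker incl(1) unfolding N_def by blast
  have A'N: "A' \<inter> N \<subseteq> {0}" "B' \<inter> N \<subseteq> {0}"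
    using fid incl(4) unfolding N_def by auto
  have NW: "A' \<subseteq> span W" "N \<subseteq> span W" "B' \<subseteq> span W"
    using W(1) incl unfolding N_def by auto
  have "dim A = dim A' + dim N"
    using sums_image_kernel[OF A incl(2) fA fid f] dim_direct_sum[OF A' N A'N(1) NW(1,2) W(2)]
    unfolding N_def by simp
  moreover have "dim B = dim B' + dim N"
    using sums_image_kernel[OF B incl(3) fB] fid incl(4) f NB
      dim_direct_sum[OF B' N A'N(2) NW(3,2) W(2)]
    by (auto simp: subset_iff)
  ultimately show ?thesis by simp
qed

end

section \<open>Chains and boundaries\<close>

interpretation fun_space: vector_space "\<lambda>a (f::'a \<Rightarrow> 'b::field) x. a * f x"
  by unfold_locales (auto simp: fun_eq_iff algebra_simps)

definition face_closed :: "'v set set \<Rightarrow> bool" where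
  "face_closed K \<longleftrightarrow> (\<forall>\<sigma>\<in>K. \<forall>\<tau>. \<tau> \<subseteq> \<sigma> \<longrightarrow> \<tau> \<noteq> {} \<longrightarrow> \<tau> \<in> K)"

lemma face_closedD: "face_closed K \<Longrightarrow> \<sigma> \<in> K \<Longrightarrow> \<tau> \<subseteq> \<sigma> \<Longrightarrow> \<tau> \<noteq> {} \<Longrightarrow> \<tau> \<in> K"
  unfolding face_closed_def by blast

definition avoids :: "'v \<Rightarrow> ('v set \<Rightarrow> 'f::zero) \<Rightarrow> bool" where
  "avoids u c \<longleftrightarrow> (\<forall>\<sigma>. u \<in> \<sigma> \<longrightarrow> c \<sigma> = 0)"

definition unit_chain :: "'v set \<Rightarrow> 'v set \<Rightarrow> 'f::field" where
  "unit_chain \<sigma> \<tau> = (if \<tau> = \<sigma> then 1 else 0)"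

lemma sum_fun_apply: "(\<Sum>i\<in>A. f i) x = (\<Sum>i\<in>A. f i x)"
  by (induction A rule: infinite_finite_induct) auto

lemma card_Suc_finite: "card \<sigma> = Suc k \<Longrightarrow> finite \<sigma>"
  by (rule ccontr) simp

lemma chainsD: "c \<in> chains K k \<Longrightarrow> c \<sigma> \<noteq> 0 \<Longrightarrow> \<sigma> \<in> K \<and> card \<sigma> = Suc k"
  unfolding chains_def by blast

lemma chains_zero [simp]: "0 \<in> chains K k"
  by (simp add: chains_def)

lemma chains_add: "c \<in> chains K k \<Longrightarrow> d \<in> chains K k \<Longrightarrow> c + d \<in> chains K k"
  by (simp add: chains_def) (metis add.left_neutral add.right_neutral)

lemma chains_diff: "c \<in> chains K k \<Longrightarrow> d \<in> chains K k \<Longrightarrow> c - d \<in> chains K k"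
  by (simp add: chains_def) (metis diff_self diff_zero)

lemma chains_scale: "c \<in> chains K k \<Longrightarrow> (\<lambda>x. a * c x) \<in> chains K k"
  by (simp add: chains_def)

lemma chains_mono: "K \<subseteq> L \<Longrightarrow> c \<in> chains K k \<Longrightarrow> c \<in> chains L k"
  by (auto simp: chains_def)

lemma chains_avoiding: "chains {\<sigma>\<in>K. u \<notin> \<sigma>} k = {c \<in> chains K k. avoids u c}"
  by (auto simp: chains_def avoids_def)

lemma chains_subset_span:
  assumes "finite V" "K \<subseteq> Pow V"
  shows "(chains K k :: ('v set \<Rightarrow> 'f::field) set) \<subseteq> fun_space.span (unit_chain ` Pow V)"
proof
  fix c :: "'v set \<Rightarrow> 'f" assume c: "c \<in> chains K k"
  have "c = (\<Sum>\<sigma>\<in>Pow V. (\<lambda>\<tau>. c \<sigma> * unit_chain \<sigma> \<tau>))"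
  proof
    fix \<tau>
    have "c \<tau> = (if \<tau> \<in> Pow V then c \<tau> else 0)"
      using c assms(2) by (auto simp: chains_def)
    also have "\<dots> = (\<Sum>\<sigma>\<in>Pow V. c \<sigma> * unit_chain \<sigma> \<tau>)"
      using assms(1) by (simp add: unit_chain_def if_distrib sum.delta' cong: if_cong)
    finally show "c \<tau> = (\<Sum>\<sigma>\<in>Pow V. (\<lambda>\<tau>. c \<sigma> * unit_chain \<sigma> \<tau>)) \<tau>"
      by (simp add: sum_fun_apply)
  qed
  also have "\<dots> \<in> fun_space.span (unit_chain ` Pow V)"
    by (intro fun_space.span_sum fun_space.span_scale fun_space.span_base) auto
  finally show "c \<in> fun_space.span (unit_chain ` Pow V)" .
qed

lemma bdry_add: "bdry V k (c + d) = bdry V k c + bdry V k d"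
  by (auto simp: fun_eq_iff bdry_def sum.distrib algebra_simps)

lemma bdry_diff: "bdry V k (c - d) = bdry V k c - bdry V k d"
  by (auto simp: fun_eq_iff bdry_def sum_subtractf algebra_simps)

lemma bdry_scale: "bdry V k (\<lambda>x. a * c x) = (\<lambda>x. a * bdry V k c x)"
  by (auto simp: fun_eq_iff bdry_def sum_distrib_left algebra_simps)

lemma bdry_zero [simp]: "bdry V k 0 = 0"
  by (auto simp: fun_eq_iff bdry_def)

lemma bdry_nonzeroD:
  assumes "bdry V k c \<tau> \<noteq> 0"
  shows "card \<tau> = k \<and> (\<exists>w\<in>V - \<tau>. c (insert w \<tau>) \<noteq> 0)"
proof -
  have k: "k \<ge> 1 \<and> card \<tau> = k" using assms by (simp add: bdry_def split: if_splits)
  then have "(\<Sum>w\<in>V - \<tau>. (-1) ^ card {x\<in>\<tau>. x < w} * c (insert w \<tau>)) \<noteq> 0"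
    using assms by (simp add: bdry_def)
  then obtain w where "w \<in> V - \<tau>" "(-1) ^ card {x\<in>\<tau>. x < w} * c (insert w \<tau>) \<noteq> 0"
    by (rule sum.not_neutral_contains_not_neutral)
  then show ?thesis using k by auto
qed

lemma bdry_chains:
  assumes K: "face_closed K" and c: "c \<in> chains K (Suc k)"
  shows "bdry V (Suc k) c \<in> chains K k"
  unfolding chains_def
proof (intro CollectI allI impI)
  fix \<tau> assume "bdry V (Suc k) c \<tau> \<noteq> 0"
  then obtain w where card: "card \<tau> = Suc k" and w: "c (insert w \<tau>) \<noteq> 0"
    using bdry_nonzeroD by blast
  have "\<tau> \<subseteq> insert w \<tau>" "\<tau> \<noteq> {}" using card by auto
  then have "\<tau> \<in> K" using face_closedD[OF K chainsD[OF c w, THEN conjunct1]] by blast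
  with card show "\<tau> \<in> K \<and> card \<tau> = Suc k" by simp
qed

lemma card_less_insert:
  assumes "finite \<rho>" "w \<notin> \<rho>"
  shows "card {x\<in>insert w \<rho>. x < v} = card {x\<in>\<rho>. x < v} + (if w < v then 1 else 0)"
proof -
  have "{x\<in>insert w \<rho>. x < v} = (if w < v then insert w {x\<in>\<rho>. x < v} else {x\<in>\<rho>. x < v})"
    by auto
  then show ?thesis using assms by simp
qed

lemma sum_sum_Diff_antisym:
  fixes F :: "'a::linorder \<Rightarrow> 'a \<Rightarrow> 'b::ab_group_add"
  assumes fin: "finite A"
    and anti: "\<And>w w'. w \<in> A \<Longrightarrow> w' \<in> A \<Longrightarrow> w < w' \<Longrightarrow> F w' w = - F w w'"
  shows "(\<Sum>w\<in>A. \<Sum>w'\<in>A - {w}. F w w') = 0"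
proof -
  have split: "(\<Sum>w'\<in>A - {w}. F w w') =
      (\<Sum>w'\<in>{w'\<in>A. w < w'}. F w w') + (\<Sum>w'\<in>{w'\<in>A. w' < w}. F w w')" for w
  proof -
    have "A - {w} = {w'\<in>A. w < w'} \<union> {w'\<in>A. w' < w}"
      "{w'\<in>A. w < w'} \<inter> {w'\<in>A. w' < w} = {}" by auto
    then show ?thesis using fin by (simp add: sum.union_disjoint)
  qed
  have "(\<Sum>w\<in>A. \<Sum>w'\<in>{w'\<in>A. w' < w}. F w w') = (\<Sum>w'\<in>A. \<Sum>w\<in>{w\<in>A. w' < w}. F w w')"
    by (rule sum.swap_restrict[OF fin fin])
  also have "\<dots> = - (\<Sum>w\<in>A. \<Sum>w'\<in>{w'\<in>A. w < w'}. F w w')"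
    using anti by (simp add: sum_negf)
  finally show ?thesis by (simp add: split sum.distrib)
qed

lemma bdry_bdry:
  assumes "finite V"
  shows "bdry V k (bdry V (Suc k) c) = 0"
proof
  fix \<rho>
  show "bdry V k (bdry V (Suc k) c) \<rho> = 0 \<rho>"
  proof (cases "k \<ge> 1 \<and> card \<rho> = k")
    case False then show ?thesis by (auto simp: bdry_def)
  next
    case True
    then have fin: "finite \<rho>" using card.infinite by force
    define F where "F w w' = (-1::'b) ^ card {x\<in>\<rho>. x < w}
        * ((-1) ^ card {x\<in>insert w \<rho>. x < w'} * c (insert w' (insert w \<rho>)))" for w w'
    have "bdry V k (bdry V (Suc k) c) \<rho> = (\<Sum>w\<in>V - \<rho>. \<Sum>w'\<in>V - \<rho> - {w}. F w w')"
      unfolding bdry_def F_def using True fin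
      by (auto simp: sum_distrib_left Diff_insert2[symmetric] intro!: sum.cong)
    also have "\<dots> = 0"
    proof (rule sum_sum_Diff_antisym)
      fix w w' assume w: "w \<in> V - \<rho>" "w' \<in> V - \<rho>" "w < w'"
      have "card {x\<in>insert w' \<rho>. x < w} = card {x\<in>\<rho>. x < w}"
        "card {x\<in>insert w \<rho>. x < w'} = Suc (card {x\<in>\<rho>. x < w'})"
        using card_less_insert[OF fin, of w' w] card_less_insert[OF fin, of w w'] w by auto
      moreover have "insert w (insert w' \<rho>) = insert w' (insert w \<rho>)" by auto
      ultimately show "F w' w = - F w w'"
        unfolding F_def by (simp add: algebra_simps)
    qed (use assms in simp)
    finally show ?thesis by simp
  qed
qed

lemma bdry_avoids: "avoids u c \<Longrightarrow> avoids u (bdry V k c)"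
  by (auto simp: avoids_def bdry_def intro!: sum.neutral)

lemma bdry_Diff_vertex:
  assumes "avoids u c"
  shows "bdry (V - {u}) k c = bdry V k c"
proof
  fix \<tau>
  show "bdry (V - {u}) k c \<tau> = bdry V k c \<tau>"
  proof (cases "u \<in> V - \<tau>")
    case True
    have "V - \<tau> = insert u (V - {u} - \<tau>)" "u \<notin> V - {u} - \<tau>" using True by auto
    moreover have "c (insert u \<tau>) = 0" using assms by (simp add: avoids_def)
    ultimately show ?thesis
      by (cases "finite (V - {u} - \<tau>)") (simp_all add: bdry_def)
  next
    case False
    then have "V - {u} - \<tau> = V - \<tau>" by auto
    then show ?thesis by (simp add: bdry_def)
  qed
qed

lemma cycles_avoiding: "cycles (V - {u}) {\<sigma>\<in>K. u \<notin> \<sigma>} k = {c \<in> cycles V K k. avoids u c}"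
  unfolding cycles_def chains_avoiding by (auto simp: bdry_Diff_vertex)

lemma boundaries_avoiding:
  "boundaries (V - {u}) {\<sigma>\<in>K. u \<notin> \<sigma>} k = bdry V (Suc k) ` {c \<in> chains K (Suc k). avoids u c}"
  unfolding boundaries_def chains_avoiding by (rule image_cong) (auto simp: bdry_Diff_vertex)

lemma subspace_cycles: "fun_space.subspace (cycles V K k :: ('v::linorder set \<Rightarrow> 'f::field) set)"
  unfolding cycles_def
  by (rule fun_space.subspaceI) (auto intro: chains_add chains_scale simp: bdry_add bdry_scale)

lemma subspace_boundaries:
  "fun_space.subspace (boundaries V K k :: ('v::linorder set \<Rightarrow> 'f::field) set)"
  unfolding boundaries_def
proof (rule fun_space.subspaceI)
  show "(0::'v set \<Rightarrow> 'f) \<in> bdry V (Suc k) ` chains K (Suc k)"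
    by (metis bdry_zero chains_zero image_eqI)
next
  fix x y :: "'v set \<Rightarrow> 'f"
  assume "x \<in> bdry V (Suc k) ` chains K (Suc k)" "y \<in> bdry V (Suc k) ` chains K (Suc k)"
  then show "x + y \<in> bdry V (Suc k) ` chains K (Suc k)"
    by (auto simp: bdry_add[symmetric] intro: chains_add)
next
  fix a :: 'f and x :: "'v set \<Rightarrow> 'f"
  assume "x \<in> bdry V (Suc k) ` chains K (Suc k)"
  then show "(\<lambda>y. a * x y) \<in> bdry V (Suc k) ` chains K (Suc k)"
    by (auto simp: bdry_scale[symmetric] intro: chains_scale)
qed

section \<open>Coning off a dominated vertex\<close>

text \<open>Only simplices with at least two vertices need to extend: \<open>{u, v}\<close> is not a simplex of
  the vertex complex \<open>K\<^sub>0\<close>, which is why the theorem is restricted to degrees \<open>k \<ge> 1\<close>.\<close>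

definition cone_closed :: "'v \<Rightarrow> 'v \<Rightarrow> 'v set set \<Rightarrow> bool" where
  "cone_closed u v K \<longleftrightarrow> (\<forall>\<sigma>\<in>K. u \<in> \<sigma> \<longrightarrow> 2 \<le> card \<sigma> \<longrightarrow> insert v \<sigma> \<in> K)"

text \<open>The sign is the incidence number of the face \<open>\<rho> - {v}\<close> in \<open>\<rho>\<close> under the orientation used
  by \<open>bdry\<close>, so that \<open>\<partial> \<circ> cone + cone \<circ> \<partial>\<close> is the identity on simplices through \<open>u\<close>.\<close>

definition cone :: "'v::linorder \<Rightarrow> 'v \<Rightarrow> ('v set \<Rightarrow> 'f::field) \<Rightarrow> 'v set \<Rightarrow> 'f" where
  "cone u v c \<rho> = (if u \<in> \<rho> \<and> v \<in> \<rho> then (-1) ^ card {x\<in>\<rho>. x < v} * c (\<rho> - {v}) else 0)"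

definition retraction :: "'v::linorder set \<Rightarrow> 'v \<Rightarrow> 'v \<Rightarrow> nat \<Rightarrow> ('v set \<Rightarrow> 'f::field) \<Rightarrow> 'v set \<Rightarrow> 'f" where
  "retraction V u v k c = c - bdry V (Suc k) (cone u v c) - cone u v (bdry V k c)"

lemma cone_closedD:
  "cone_closed u v K \<Longrightarrow> \<sigma> \<in> K \<Longrightarrow> u \<in> \<sigma> \<Longrightarrow> 2 \<le> card \<sigma> \<Longrightarrow> insert v \<sigma> \<in> K"
  unfolding cone_closed_def by blast

lemma cone_add: "cone u v (c + d) = cone u v c + cone u v d"
  by (auto simp: fun_eq_iff cone_def algebra_simps)

lemma cone_scale: "cone u v (\<lambda>x. a * c x) = (\<lambda>x. a * cone u v c x)"
  by (auto simp: fun_eq_iff cone_def algebra_simps)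

lemma cone_zero [simp]: "cone u v 0 = 0"
  by (simp add: fun_eq_iff cone_def)

lemma cone_avoids: "u \<noteq> v \<Longrightarrow> avoids u c \<Longrightarrow> cone u v c = 0"
  by (auto simp: avoids_def cone_def fun_eq_iff)

lemma cone_chains:
  assumes k: "k \<ge> 1" and K: "cone_closed u v K" and uv: "u \<noteq> v" and c: "c \<in> chains K k"
  shows "cone u v c \<in> chains K (Suc k)"
  unfolding chains_def
proof (intro CollectI allI impI)
  fix \<rho> assume "cone u v c \<rho> \<noteq> 0"
  then have \<rho>: "u \<in> \<rho>" "v \<in> \<rho>" and "c (\<rho> - {v}) \<noteq> 0"
    by (auto simp: cone_def split: if_splits)
  then have face: "\<rho> - {v} \<in> K" "card (\<rho> - {v}) = Suc k"
    using chainsD[OF c] by auto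
  have "u \<in> \<rho> - {v}" "2 \<le> card (\<rho> - {v})" using \<rho> uv face(2) k by auto
  with face(1) have "insert v (\<rho> - {v}) \<in> K"
    by (rule cone_closedD[OF K])
  moreover have "card \<rho> = Suc (Suc k)"
    using face(2) card_Suc_Diff1[of \<rho> v] \<rho>(2) card_Suc_finite[OF face(2)] by simp
  ultimately show "\<rho> \<in> K \<and> card \<rho> = Suc (Suc k)"
    using \<rho>(2) by (simp add: insert_absorb)
qed

lemma cone_bdry_chains:
  assumes k: "k \<ge> 1" and K: "face_closed K" "cone_closed u v K" and uv: "u \<noteq> v"
    and c: "c \<in> chains K k"
  shows "cone u v (bdry V k c) \<in> chains K k"
  unfolding chains_def
proof (intro CollectI allI impI)
  fix \<sigma> assume "cone u v (bdry V k c) \<sigma> \<noteq> 0"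
  then have \<sigma>: "u \<in> \<sigma>" "v \<in> \<sigma>" and "bdry V k c (\<sigma> - {v}) \<noteq> 0"
    by (auto simp: cone_def split: if_splits)
  then obtain w where card: "card (\<sigma> - {v}) = k" and w: "c (insert w (\<sigma> - {v})) \<noteq> 0"
    using bdry_nonzeroD by blast
  have \<rho>: "insert w (\<sigma> - {v}) \<in> K" "card (insert w (\<sigma> - {v})) = Suc k"
    using chainsD[OF c w] by auto
  have "u \<in> insert w (\<sigma> - {v})" "2 \<le> card (insert w (\<sigma> - {v}))"
    using \<sigma> uv \<rho>(2) k by auto
  with \<rho>(1) have coned: "insert v (insert w (\<sigma> - {v})) \<in> K"
    by (rule cone_closedD[OF K(2)])
  have "\<sigma> \<subseteq> insert v (insert w (\<sigma> - {v}))" "\<sigma> \<noteq> {}" using \<sigma> by auto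
  with coned have "\<sigma> \<in> K"
    by (rule face_closedD[OF K(1)])
  moreover have "finite \<sigma>" using card k card_ge_0_finite[of "\<sigma> - {v}"] by simp
  ultimately show "\<sigma> \<in> K \<and> card \<sigma> = Suc k"
    using card \<sigma>(2) card_Suc_Diff1[of \<sigma> v] by simp
qed

lemma bdry_cone_outside:
  assumes V: "finite V" "v \<in> V" and \<sigma>: "u \<in> \<sigma>" "v \<notin> \<sigma>" "card \<sigma> = Suc k"
  shows "bdry V (Suc k) (cone u v c) \<sigma> = c \<sigma>"
proof -
  have fin: "finite \<sigma>" using card_Suc_finite[OF \<sigma>(3)] .
  have "bdry V (Suc k) (cone u v c) \<sigma> = (\<Sum>w\<in>V - \<sigma>. (-1) ^ card {x\<in>\<sigma>. x < w} * cone u v c (insert w \<sigma>))"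
    using \<sigma>(3) by (simp add: bdry_def)
  also have "\<dots> = (-1) ^ card {x\<in>\<sigma>. x < v} * cone u v c (insert v \<sigma>)
      + (\<Sum>w\<in>V - \<sigma> - {v}. (-1) ^ card {x\<in>\<sigma>. x < w} * cone u v c (insert w \<sigma>))"
    using V \<sigma>(2) by (simp add: sum.remove)
  also have "(\<Sum>w\<in>V - \<sigma> - {v}. (-1) ^ card {x\<in>\<sigma>. x < w} * cone u v c (insert w \<sigma>)) = 0"
    using \<sigma>(2) by (intro sum.neutral) (auto simp: cone_def)
  also have "cone u v c (insert v \<sigma>) = (-1) ^ card {x\<in>\<sigma>. x < v} * c \<sigma>"
    using card_less_insert[OF fin \<sigma>(2), of v] \<sigma>(1,2) by (simp add: cone_def)
  finally show ?thesis by (simp add: power_mult_distrib[symmetric])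
qed

lemma cone_bdry_inside:
  fixes c :: "'v::linorder set \<Rightarrow> 'f::field"
  assumes V: "finite V" "v \<in> V" and \<sigma>: "u \<in> \<sigma>" "v \<in> \<sigma>" "card \<sigma> = Suc k" and k: "k \<ge> 1"
  shows "bdry V (Suc k) (cone u v c) \<sigma> + cone u v (bdry V k c) \<sigma> = c \<sigma>"
proof -
  define \<tau> where "\<tau> = \<sigma> - {v}"
  define s where "s = (-1::'f) ^ card {x\<in>\<sigma>. x < v}"
  define R where "R = (\<Sum>w\<in>V - \<sigma>. (-1) ^ card {x\<in>\<tau>. x < w} * c (insert w \<tau>))"
  have \<sigma>\<tau>: "\<sigma> = insert v \<tau>" "v \<notin> \<tau>" "finite \<tau>"
    using \<sigma> card_Suc_finite[OF \<sigma>(3)] unfolding \<tau>_def by auto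
  have s: "s * s = 1" "(-1) ^ card {x\<in>\<tau>. x < v} = s"
    using card_less_insert[OF \<sigma>\<tau>(3,2), of v] \<sigma>\<tau>(1)
    unfolding s_def by (simp_all add: power_mult_distrib[symmetric])
  have "bdry V k c \<tau> = (\<Sum>w\<in>insert v (V - \<sigma>). (-1) ^ card {x\<in>\<tau>. x < w} * c (insert w \<tau>))"
  proof -
    have "V - \<tau> = insert v (V - \<sigma>)" using V(2) \<sigma>\<tau>(1,2) by auto
    moreover have "card \<tau> = k" using \<sigma>(3) \<sigma>\<tau> by simp
    ultimately show ?thesis using k by (simp only: bdry_def simp_thms if_True)
  qed
  also have "\<dots> = s * c \<sigma> + R"
    using V \<sigma>\<tau> s(2) unfolding R_def by simp
  finally have "cone u v (bdry V k c) \<sigma> = c \<sigma> + s * R"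
    using \<sigma> s(1) unfolding cone_def s_def[symmetric] \<tau>_def[symmetric]
    by (simp add: distrib_left mult.assoc[symmetric])
  moreover have "bdry V (Suc k) (cone u v c) \<sigma> = - (s * R)"
  proof -
    have "(-1) ^ card {x\<in>\<sigma>. x < w} * cone u v c (insert w \<sigma>)
        = - (s * ((-1) ^ card {x\<in>\<tau>. x < w} * c (insert w \<tau>)))" if w: "w \<in> V - \<sigma>" for w
    proof -
      have "w \<noteq> v" "w \<notin> \<tau>" "insert w \<sigma> - {v} = insert w \<tau>" using w \<sigma>\<tau> by auto
      moreover have "card {x\<in>insert w \<sigma>. x < v} = card {x\<in>\<sigma>. x < v} + (if w < v then 1 else 0)"
        "card {x\<in>\<sigma>. x < w} = card {x\<in>\<tau>. x < w} + (if v < w then 1 else 0)"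
        using w card_less_insert[OF \<sigma>\<tau>(3,2), of w] \<sigma>\<tau>(1) card_less_insert[of \<sigma> w v] \<sigma>\<tau>(3)
        by auto
      ultimately show ?thesis
        using \<sigma> unfolding cone_def s_def by (cases "w < v") (auto simp: power_add)
    qed
    then show ?thesis
      using \<sigma>(3) unfolding R_def by (simp add: bdry_def sum_negf sum_distrib_left)
  qed
  ultimately show ?thesis by simp
qed

lemma retraction_vanishes_through:
  assumes V: "finite V" "v \<in> V" and uv: "u \<noteq> v" and k: "k \<ge> 1"
    and c: "c \<in> chains K k" and u: "u \<in> \<sigma>"
  shows "retraction V u v k c \<sigma> = 0"
proof (cases "card \<sigma> = Suc k")
  case card: True
  have "bdry V (Suc k) (cone u v c) \<sigma> + cone u v (bdry V k c) \<sigma> = c \<sigma>"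
  proof (cases "v \<in> \<sigma>")
    case True
    then show ?thesis by (rule cone_bdry_inside[OF V u _ card k])
  next
    case False
    then have "cone u v (bdry V k c) \<sigma> = 0" by (simp add: cone_def)
    with bdry_cone_outside[OF V u False card] show ?thesis by simp
  qed
  then show ?thesis by (simp add: retraction_def algebra_simps)
next
  case False
  have "cone u v (bdry V k c) \<sigma> = 0"
  proof (rule ccontr)
    assume "cone u v (bdry V k c) \<sigma> \<noteq> 0"
    then have "v \<in> \<sigma>" "card (\<sigma> - {v}) = k"
      using bdry_nonzeroD by (fastforce simp: cone_def split: if_splits)+
    then show False
      using False k card_ge_0_finite[of "\<sigma> - {v}"] card_Suc_Diff1[of \<sigma> v] by simp
  qed
  then show ?thesis
    using False chainsD[OF c] by (auto simp: retraction_def bdry_def)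
qed

lemma retraction_avoids:
  "finite V \<Longrightarrow> v \<in> V \<Longrightarrow> u \<noteq> v \<Longrightarrow> k \<ge> 1 \<Longrightarrow> c \<in> chains K k
    \<Longrightarrow> avoids u (retraction V u v k c)"
  unfolding avoids_def by (blast intro: retraction_vanishes_through)

lemma retraction_chains:
  assumes "k \<ge> 1" "face_closed K" "cone_closed u v K" "u \<noteq> v" "c \<in> chains K k"
  shows "retraction V u v k c \<in> chains K k"
  unfolding retraction_def
  using assms by (intro chains_diff bdry_chains cone_chains cone_bdry_chains)

lemma retraction_fixes: "u \<noteq> v \<Longrightarrow> avoids u c \<Longrightarrow> retraction V u v k c = c"
  by (simp add: retraction_def cone_avoids bdry_avoids)

lemma bdry_retraction:
  "finite V \<Longrightarrow> bdry V (Suc k) (retraction V u v (Suc k) c) = retraction V u v k (bdry V (Suc k) c)"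
  by (simp add: retraction_def bdry_diff bdry_bdry)

lemma retraction_add: "retraction V u v k (c + d) = retraction V u v k c + retraction V u v k d"
  by (simp add: retraction_def bdry_add cone_add algebra_simps)

lemma retraction_scale:
  "retraction V u v k (\<lambda>x. a * c x) = (\<lambda>x. a * retraction V u v k c x)"
  by (simp add: retraction_def bdry_scale cone_scale fun_eq_iff algebra_simps)

lemma linear_retraction:
  "Vector_Spaces.linear (\<lambda>a f x. a * f x) (\<lambda>a f x. a * f x) (retraction V u v k)"
  unfolding Vector_Spaces.linear_iff
  by (simp add: retraction_add retraction_scale fun_space.vector_space_axioms)

context
  fixes V :: "'v::linorder set" and u v :: 'v and k :: nat
  assumes V: "finite V" "v \<in> V" and uv: "u \<noteq> v" and k: "k \<ge> 1"
begin

lemma retraction_cycles: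
  assumes K: "face_closed K" "cone_closed u v K" and z: "z \<in> cycles V K k"
  shows "retraction V u v k z \<in> {c \<in> cycles V K k. avoids u c}"
proof -
  obtain m where m: "k = Suc m" using k by (cases k) auto
  have "bdry V k (retraction V u v k z) = retraction V u v m (bdry V k z)"
    unfolding m by (rule bdry_retraction[OF V(1)])
  also have "\<dots> = 0" using z by (simp add: cycles_def retraction_def)
  finally show ?thesis
    using z retraction_chains[OF k K uv] retraction_avoids[OF V uv k]
    by (auto simp: cycles_def)
qed

lemma retraction_boundaries:
  assumes K: "face_closed K" "cone_closed u v K" and b: "b \<in> boundaries V K k"
  shows "retraction V u v k b \<in> bdry V (Suc k) ` {c \<in> chains K (Suc k). avoids u c}"
proof -
  obtain c where c: "b = bdry V (Suc k) c" "c \<in> chains K (Suc k)"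
    using b unfolding boundaries_def by blast
  then have "retraction V u v k b = bdry V (Suc k) (retraction V u v (Suc k) c)"
    by (simp add: bdry_retraction[OF V(1)])
  moreover have "retraction V u v (Suc k) c \<in> {c \<in> chains K (Suc k). avoids u c}"
    using retraction_chains[OF _ K uv c(2)] retraction_avoids[OF V uv _ c(2)] by simp
  ultimately show ?thesis by blast
qed

lemma cycle_minus_retraction:
  assumes KL: "K \<subseteq> L" and K: "cone_closed u v K" and z: "z \<in> cycles V K k"
  shows "z - retraction V u v k z \<in> boundaries V L k"
proof -
  have "z - retraction V u v k z = bdry V (Suc k) (cone u v z)"
    using z by (simp add: cycles_def retraction_def)
  moreover have "cone u v z \<in> chains L (Suc k)"
    using chains_mono[OF KL cone_chains[OF k K uv]] z by (auto simp: cycles_def)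
  ultimately show ?thesis unfolding boundaries_def by blast
qed

lemma boundary_minus_retraction:
  assumes L: "face_closed L" "cone_closed u v L" and b: "b \<in> boundaries V L k"
  shows "b - retraction V u v k b \<in> boundaries V L k"
proof -
  obtain c where c: "b = bdry V (Suc k) c" "c \<in> chains L (Suc k)"
    using b unfolding boundaries_def by blast
  then have "b - retraction V u v k b = bdry V (Suc k) (c - retraction V u v (Suc k) c)"
    by (simp add: bdry_diff bdry_retraction[OF V(1)])
  moreover have "c - retraction V u v (Suc k) c \<in> chains L (Suc k)"
    using chains_diff[OF c(2) retraction_chains[OF _ L uv c(2)]] by simp
  ultimately show ?thesis unfolding boundaries_def by blast
qed

lemma retraction_kernel_boundaries:
  assumes KL: "K \<subseteq> L" and K: "cone_closed u v K" and L: "face_closed L" "cone_closed u v L"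
    and z: "z \<in> cycles V K k" and b: "b \<in> boundaries V L k"
    and P: "retraction V u v k (z + b) = 0"
  shows "z + b \<in> boundaries V L k"
proof -
  have "retraction V u v k z + retraction V u v k b = 0" using P by (simp add: retraction_add)
  then have "z + b = (z - retraction V u v k z) + (b - retraction V u v k b)"
    by (metis add_diff_add diff_zero)
  also have "\<dots> \<in> boundaries V L k"
    by (rule fun_space.subspace_add[OF subspace_boundaries
          cycle_minus_retraction[OF KL K z] boundary_minus_retraction[OF L b]])
  finally show ?thesis .
qed

lemma persistence_rank_avoiding:
  fixes K L :: "'v set set"
  assumes KL: "K \<subseteq> L" "L \<subseteq> Pow V"
    and K: "face_closed K" "cone_closed u v K" and L: "face_closed L" "cone_closed u v L"
  shows "fun_space.dim {z + b |z b. z \<in> (cycles V K k :: ('v set \<Rightarrow> 'f::field) set)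
                                  \<and> b \<in> boundaries V L k}
           - fun_space.dim (boundaries V L k :: ('v set \<Rightarrow> 'f) set)
       = fun_space.dim {z + b |z b. z \<in> (cycles (V - {u}) {\<sigma>\<in>K. u \<notin> \<sigma>} k :: ('v set \<Rightarrow> 'f) set)
                                  \<and> b \<in> boundaries (V - {u}) {\<sigma>\<in>L. u \<notin> \<sigma>} k}
           - fun_space.dim (boundaries (V - {u}) {\<sigma>\<in>L. u \<notin> \<sigma>} k :: ('v set \<Rightarrow> 'f) set)"
    (is "fun_space.dim ?A - fun_space.dim ?B = fun_space.dim ?A' - fun_space.dim ?B'")
proof (rule fun_space.dim_diff_eq_of_retraction[OF _ _ _ _ _ _ _ _ _ _ linear_retraction])
  let ?P = "retraction V u v k :: ('v set \<Rightarrow> 'f) \<Rightarrow> _"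
  have Z': "cycles (V - {u}) {\<sigma>\<in>K. u \<notin> \<sigma>} k = {c \<in> cycles V K k. avoids u c}"
    and B': "?B' = bdry V (Suc k) ` {c \<in> chains L (Suc k). avoids u c}"
    by (rule cycles_avoiding boundaries_avoiding)+
  show "fun_space.subspace ?A" "fun_space.subspace ?B" "fun_space.subspace ?A'" "fun_space.subspace ?B'"
    by (intro fun_space.subspace_sums subspace_cycles subspace_boundaries)+
  have "?A \<subseteq> chains (Pow V) k"
    using chains_mono[OF order.trans[OF KL]] chains_mono[OF KL(2)] bdry_chains[OF L(1)]
    by (fastforce simp: cycles_def boundaries_def intro: chains_add)
  then show "?A \<subseteq> fun_space.span (unit_chain ` Pow V)"
    using chains_subset_span[OF V(1) order.refl] by blast
  show "finite (unit_chain ` Pow V)" using V(1) by simp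
  have "0 \<in> cycles W M k" for W M by (simp add: cycles_def)
  then show "?B \<subseteq> ?A" "?B' \<subseteq> ?A'" by force+
  show "?B' \<subseteq> ?B" by (subst B') (auto simp: boundaries_def)
  then show "?A' \<subseteq> ?A" unfolding Z' by blast
  show "?P x \<in> ?B'" if "x \<in> ?B" for x
    unfolding B' using retraction_boundaries[OF L that] .
  then show "?P x \<in> ?A'" if "x \<in> ?A" for x
    using that retraction_cycles[OF K] unfolding Z' by (force simp: retraction_add)
  show "?P x = x" if "x \<in> ?A'" for x
  proof -
    from that obtain z c where x: "x = z + bdry V (Suc k) c" "avoids u z" "avoids u c"
      unfolding Z' B' by blast
    then have "avoids u x" using bdry_avoids[OF x(3)] by (simp add: avoids_def)
    then show ?thesis by (rule retraction_fixes[OF uv])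
  qed
  show "x \<in> ?B" if "x \<in> ?A" and "?P x = 0" for x
    using that retraction_kernel_boundaries[OF KL(1) K(2) L] by blast
qed

end

section \<open>Distances and power complexes\<close>

lemma is_walk_iff_successively:
  "is_walk V E xs x y \<longleftrightarrow> xs \<noteq> [] \<and> hd xs = x \<and> last xs = y \<and> set xs \<subseteq> V \<and> successively E xs"
  unfolding is_walk_def successively_conv_nth by blast

lemma gdist_le_walk: "is_walk V E xs x y \<Longrightarrow> gdist V E x y \<le> enat (length xs - 1)"
  unfolding gdist_def by (rule Inf_lower) blast

lemma gdist_greatest:
  "(\<And>xs. is_walk V E xs x y \<Longrightarrow> m \<le> enat (length xs - 1)) \<Longrightarrow> m \<le> gdist V E x y"
  unfolding gdist_def by (rule Inf_greatest) blast

lemma gdist_le_if_shorter_walks: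
  assumes "\<And>xs. is_walk V E xs x y \<Longrightarrow> \<exists>ys. is_walk V' E' ys x' y' \<and> length ys \<le> length xs"
  shows "gdist V' E' x' y' \<le> gdist V E x y"
proof (rule gdist_greatest)
  fix xs assume "is_walk V E xs x y"
  then obtain ys where ys: "is_walk V' E' ys x' y'" "length ys \<le> length xs" using assms by blast
  have "gdist V' E' x' y' \<le> enat (length ys - 1)" by (rule gdist_le_walk[OF ys(1)])
  also have "\<dots> \<le> enat (length xs - 1)" using ys(2) by simp
  finally show "gdist V' E' x' y' \<le> enat (length xs - 1)" .
qed

lemma gdist_commute:
  assumes "simple_graph V E"
  shows "gdist V E x y = gdist V E y x"
proof -
  have "gdist V E a b \<le> gdist V E b a" for a b
  proof (rule gdist_le_if_shorter_walks)
    fix xs assume w: "is_walk V E xs b a"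
    have "successively (\<lambda>x y. E y x) xs"
      using w assms unfolding is_walk_iff_successively simple_graph_def
      by (auto intro: successively_mono)
    then have "is_walk V E (rev xs) a b"
      using w unfolding is_walk_iff_successively by (auto simp: hd_rev last_rev)
    then show "\<exists>ys. is_walk V E ys a b \<and> length ys \<le> length xs" by force
  qed
  then show ?thesis by (metis order.antisym)
qed

lemma one_le_gdist:
  assumes "x \<noteq> y" shows "1 \<le> gdist V E x y"
proof (rule gdist_greatest)
  fix xs assume "is_walk V E xs x y"
  with assms have "length xs \<ge> 2" unfolding is_walk_def by (cases xs; cases "tl xs") auto
  then show "1 \<le> enat (length xs - 1)" by (simp add: one_enat_def)
qed

lemma gdist_le_one: "E a b \<Longrightarrow> a \<in> V \<Longrightarrow> b \<in> V \<Longrightarrow> gdist V E a b \<le> 1"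
  using gdist_le_walk[of V E "[a, b]" a b] unfolding is_walk_def
  by (auto simp: one_enat_def nth_Cons split: nat.splits)

lemma dominated_by_edge: "dominated_by V E u v \<Longrightarrow> E v u"
  by (auto simp: dominated_by_def closed_nbhd_def)

lemma dominated_by_neighbour: "dominated_by V E u v \<Longrightarrow> E u b \<Longrightarrow> b = v \<or> E v b"
  by (auto simp: dominated_by_def closed_nbhd_def)

lemma gdist_dominating_le:
  assumes d: "dominated_by V E u v" and x: "x \<noteq> u"
  shows "gdist V E v x \<le> gdist V E u x"
proof (rule gdist_le_if_shorter_walks)
  fix xs assume w: "is_walk V E xs u x"
  then obtain b r where xs: "xs = u # b # r"
    using x unfolding is_walk_def by (cases xs; cases "tl xs") auto
  have wb: "is_walk V E (b # r) b x" "E u b" using w xs unfolding is_walk_iff_successively by auto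
  show "\<exists>ys. is_walk V E ys v x \<and> length ys \<le> length xs"
  proof (cases "b = v")
    case True then show ?thesis using wb xs by (intro exI[of _ "b # r"]) auto
  next
    case False
    then have "is_walk V E (v # b # r) v x"
      using wb d dominated_by_neighbour[OF d wb(2)]
      unfolding is_walk_iff_successively dominated_by_def by auto
    then show ?thesis using xs by (intro exI[of _ "v # b # r"]) auto
  qed
qed

lemma del_edges_redirect:
  assumes g: "simple_graph V E" and d: "dominated_by V E u v" and ab: "E a b"
  defines "f \<equiv> \<lambda>z. if z = u then v else z"
  shows "del_edges E u (f a) (f b) \<or> f a = f b"
proof -
  have sym: "E b a" "a \<noteq> b" using g ab by (auto simp: simple_graph_def)
  have vu: "v \<noteq> u" using d by (simp add: dominated_by_def)
  consider "a = u" | "b = u" | "a \<noteq> u" "b \<noteq> u" by blast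
  then show ?thesis
  proof cases
    case 1
    then have "f a = v" "f b = b" "b = v \<or> E v b"
      using sym(2) dominated_by_neighbour[OF d] ab unfolding f_def by auto
    then show ?thesis using 1 sym(2) vu by (auto simp: del_edges_def)
  next
    case 2
    then have "f b = v" "f a = a" "a = v \<or> E a v"
      using sym dominated_by_neighbour[OF d, of a] g unfolding f_def simple_graph_def by auto
    then show ?thesis using 2 sym(2) vu by (auto simp: del_edges_def)
  next
    case 3
    then show ?thesis using ab unfolding f_def del_edges_def by simp
  qed
qed

lemma walk_del_dominated:
  assumes g: "simple_graph V E" and d: "dominated_by V E u v"
    and w: "is_walk V E xs x y" and xy: "x \<noteq> u" "y \<noteq> u"
  shows "\<exists>ys. is_walk (V - {u}) (del_edges E u) ys x y \<and> length ys \<le> length xs"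
proof -
  define f where "f z = (if z = u then v else z)" for z
  let ?ys = "remdups_adj (map f xs)"
  have ws: "successively E xs" "xs \<noteq> []" "hd xs = x" "last xs = y" "set xs \<subseteq> V"
    using w unfolding is_walk_iff_successively by auto
  have "successively (\<lambda>a b. del_edges E u a b \<or> a = b) (map f xs)"
    unfolding successively_map using ws(1)
    by (rule successively_mono) (use del_edges_redirect[OF g d] in \<open>simp add: f_def\<close>)
  then have "successively (\<lambda>a b. del_edges E u a b \<or> a = b) ?ys"
    by (rule successively_remdups_adjI)
  then have "successively (del_edges E u) ?ys"
    using remdups_adj_adjacent[of _ "map f xs"] unfolding successively_conv_nth by blast
  moreover have "hd ?ys = x" "last ?ys = y" "set ?ys \<subseteq> V - {u}"
    using ws xy d by (auto simp: f_def hd_map last_map dominated_by_def)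
  ultimately have "is_walk (V - {u}) (del_edges E u) ?ys x y"
    unfolding is_walk_iff_successively using ws(2) by simp
  then show ?thesis using remdups_adj_length[of "map f xs"] by auto
qed

lemma gdist_del_dominated:
  assumes g: "simple_graph V E" and d: "dominated_by V E u v" and xy: "x \<noteq> u" "y \<noteq> u"
  shows "gdist (V - {u}) (del_edges E u) x y = gdist V E x y"
proof (rule order.antisym)
  show "gdist (V - {u}) (del_edges E u) x y \<le> gdist V E x y"
    by (rule gdist_le_if_shorter_walks) (rule walk_del_dominated[OF g d _ xy])
  show "gdist V E x y \<le> gdist (V - {u}) (del_edges E u) x y"
  proof (rule gdist_le_if_shorter_walks)
    fix xs assume "is_walk (V - {u}) (del_edges E u) xs x y"
    then have "is_walk V E xs x y"
      unfolding is_walk_iff_successively del_edges_def by (auto intro: successively_mono)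
    then show "\<exists>ys. is_walk V E ys x y \<and> length ys \<le> length xs" by blast
  qed
qed

lemma power_complex_del_dominated:
  assumes g: "simple_graph V E" and d: "dominated_by V E u v"
  shows "power_complex (del_vertices V u) (del_edges E u) n = {\<sigma> \<in> power_complex V E n. u \<notin> \<sigma>}"
proof -
  have "(\<forall>x\<in>\<sigma>. \<forall>y\<in>\<sigma>. x \<noteq> y \<longrightarrow> gdist (V - {u}) (del_edges E u) x y \<le> n)
    \<longleftrightarrow> (\<forall>x\<in>\<sigma>. \<forall>y\<in>\<sigma>. x \<noteq> y \<longrightarrow> gdist V E x y \<le> n)" if "u \<notin> \<sigma>" for \<sigma>
    using that gdist_del_dominated[OF g d] by metis
  then have "\<sigma> \<in> power_complex (V - {u}) (del_edges E u) n \<longleftrightarrow> \<sigma> \<in> power_complex V E n \<and> u \<notin> \<sigma>"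
    for \<sigma>
    by (cases "u \<in> \<sigma>") (auto simp: power_complex_def)
  then show ?thesis unfolding del_vertices_def by blast
qed

lemma power_complex_mono: "i \<le> j \<Longrightarrow> power_complex V E i \<subseteq> power_complex V E j"
  unfolding power_complex_def by (auto intro: order.trans)

lemma power_complex_subset_Pow: "power_complex V E n \<subseteq> Pow V"
  by (auto simp: power_complex_def)

lemma face_closed_power_complex: "face_closed (power_complex V E n)"
  unfolding face_closed_def power_complex_def by (auto intro: finite_subset)

lemma cone_closed_power_complex:
  assumes g: "simple_graph V E" and d: "dominated_by V E u v"
  shows "cone_closed u v (power_complex V E n)"
  unfolding cone_closed_def
proof (intro ballI impI)
  fix \<sigma> assume \<sigma>: "\<sigma> \<in> power_complex V E n" and u: "u \<in> \<sigma>" and two: "2 \<le> card \<sigma>"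
  have V: "v \<in> V" "u \<in> V" using d by (auto simp: dominated_by_def)
  have dist: "gdist V E x y \<le> n" if "x \<in> \<sigma>" "y \<in> \<sigma>" "x \<noteq> y" for x y
    using \<sigma> that by (auto simp: power_complex_def)
  have "\<sigma> \<noteq> {u}" using two by auto
  then obtain z where z: "z \<in> \<sigma>" "u \<noteq> z" using u by blast
  have n: "1 \<le> n" using order.trans[OF one_le_gdist[OF z(2)] dist[OF u z]] .
  have from_v: "gdist V E v y \<le> n" if "y \<in> \<sigma>" for y
  proof (cases "y = u")
    case True
    have "gdist V E v u \<le> 1" by (rule gdist_le_one[of E v u V, OF dominated_by_edge[OF d] V])
    with True n show ?thesis by (simp add: order.trans)
  next
    case False
    then show ?thesis using order.trans[OF gdist_dominating_le[OF d False] dist[OF u that]] by simp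
  qed
  have "gdist V E x y \<le> n" if xy: "x \<in> insert v \<sigma>" "y \<in> insert v \<sigma>" "x \<noteq> y" for x y
  proof -
    consider "x = v" | "y = v" | "x \<in> \<sigma>" "y \<in> \<sigma>" using xy by blast
    then show ?thesis
    proof cases
      case 1
      then show ?thesis using xy from_v by auto
    next
      case 2
      then show ?thesis using xy from_v gdist_commute[OF g, of x y] by auto
    qed (use xy dist in auto)
  qed
  then show "insert v \<sigma> \<in> power_complex V E n"
    using \<sigma> V(1) by (auto simp: power_complex_def)
qed

lemma pers_betti_del_dominated:
  assumes g: "simple_graph V E" and d: "dominated_by V E u v" and k: "k \<ge> 1" and ij: "i \<le> j"
  shows "pers_betti TYPE('f::field) V E k i j
       = pers_betti TYPE('f) (del_vertices V u) (del_edges E u) k i j"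
proof -
  have V: "finite V" "v \<in> V" "u \<noteq> v" using g d by (auto simp: simple_graph_def dominated_by_def)
  show ?thesis
    unfolding pers_betti_def dimF_def power_complex_del_dominated[OF g d]
    unfolding del_vertices_def
    by (rule persistence_rank_avoiding[OF V k power_complex_mono[OF ij] power_complex_subset_Pow
          face_closed_power_complex cone_closed_power_complex[OF g d]
          face_closed_power_complex cone_closed_power_complex[OF g d]])
qed

theorem theorem3:
  fixes V :: "'v::linorder set" and E :: "'v \<Rightarrow> 'v \<Rightarrow> bool" and u v :: 'v and k :: nat
  assumes "simple_graph V E"
    and "connected_graph V E"
    and "dominated_by V E u v"
    and "k \<ge> 1"
  shows "PD TYPE('f::field) V E k = PD TYPE('f) (del_vertices V u) (del_edges E u) k"
proof (intro ext)
  fix b :: nat and d :: enat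
  note P = pers_betti_del_dominated[OF assms(1) assms(3) assms(4), where 'f = 'f]
  show "PD TYPE('f) V E k b d = PD TYPE('f) (del_vertices V u) (del_edges E u) k b d"
  proof (cases d)
    case (enat j)
    then show ?thesis by (cases "b < j") (simp_all add: PD_def betti_prev_def Let_def P)
  qed (simp add: PD_def betti_prev_def P)
qed

end
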